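(* If $\mu$ is an edge probability measure, then \[ 2\sum_{e\in\operatorname{supp}\mu}\mu(e)^2+\beta(\mu;P_3)\le 2, \] with equality if and only if $|\operatorname{supp}\mu|=1$.
   Context: $P_3$ is the path on 3 vertices. An edge probability measure is a probability measure $\mu$ on the edge set $E(K)$ of some finite complete graph $K$; $\operatorname{supp}\mu$ is the set of edges of positive mass. For a subgraph $H'\subseteq K$, $\mu(H')=\prod_{e\in E(H')}\mu(e)$, and $\beta(\mu;H)=\sum_{H'}\mu(H')$, the sum over all subgraphs $H'$ of $K$ isomorphic to $H$. *)

theory Defs
  imports Complex_Main
begin

text \<open>Simple graphs are pairs (vertex set, edge set); edges are 2-element vertex sets.\<close>

definition edges_on :: "'a set \<Rightarrow> 'a set set" where
  "edges_on V = {e. \<exists>u v. u \<in> V \<and> v \<in> V \<and> u \<noteq> v \<and> e = {u, v}}"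

abbreviation complete_edges :: "'a set \<Rightarrow> 'a set set" where
  "complete_edges V \<equiv> edges_on V"

definition graph_iso :: "'a set \<times> 'a set set \<Rightarrow> 'b set \<times> 'b set set \<Rightarrow> bool" where
  "graph_iso G H = (\<exists>f. bij_betw f (fst G) (fst H) \<and>
     (\<forall>u\<in>fst G. \<forall>v\<in>fst G. {u, v} \<in> snd G \<longleftrightarrow> {f u, f v} \<in> snd H))"

definition subgraphs_iso :: "'a set \<Rightarrow> 'b set \<times> 'b set set \<Rightarrow> ('a set \<times> 'a set set) set" where
  "subgraphs_iso V H = {(W, F). W \<subseteq> V \<and> F \<subseteq> edges_on W \<and> graph_iso (W, F) H}"

definition edge_prob_measure :: "'a set \<Rightarrow> ('a set \<Rightarrow> real) \<Rightarrow> bool" where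
  "edge_prob_measure V \<mu> \<longleftrightarrow> finite V \<and> (\<forall>e\<in>complete_edges V. \<mu> e \<ge> 0)
      \<and> (\<Sum>e\<in>complete_edges V. \<mu> e) = 1"

definition supp :: "'a set \<Rightarrow> ('a set \<Rightarrow> real) \<Rightarrow> 'a set set" where
  "supp V \<mu> = {e \<in> complete_edges V. \<mu> e > 0}"

definition beta :: "'a set \<Rightarrow> ('a set \<Rightarrow> real) \<Rightarrow> 'b set \<times> 'b set set \<Rightarrow> real" where
  "beta V \<mu> H = (\<Sum>G\<in>subgraphs_iso V H. \<Prod>e\<in>snd G. \<mu> e)"

definition P3 :: "nat set \<times> nat set set" where
  "P3 = ({0, 1, 2}, {{0, 1}, {1, 2}})"

end

(* Let T be the sum of mu(e) mu(f) over ordered pairs of distinct edges. Expanding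
   (sum of mu)^2 = 1 gives sum of mu(e)^2 = 1 - T. A copy of P3 is determined by its
   two edges, so 0 <= beta(mu; P3) <= T. Hence 2 sum mu(e)^2 + beta <= 2 - T <= 2, with
   equality iff T = 0, i.e. iff exactly one edge has positive mass. *)

theory Submission
  imports Defs
begin

definition off_diagonal :: "'a set \<Rightarrow> ('a \<times> 'a) set" where
  "off_diagonal E = {(e, f). e \<in> E \<and> f \<in> E \<and> e \<noteq> f}"

lemma finite_off_diagonal: "finite E \<Longrightarrow> finite (off_diagonal E)"
  by (rule finite_subset[of _ "E \<times> E"]) (auto simp: off_diagonal_def)

lemma square_sum_eq_sum_squares_plus_off_diagonal:
  fixes x :: "'a \<Rightarrow> 'b::comm_semiring_1"
  assumes "finite E"
  shows "(\<Sum>e\<in>E. x e)\<^sup>2 = (\<Sum>e\<in>E. (x e)\<^sup>2) + (\<Sum>(e, f)\<in>off_diagonal E. x e * x f)"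
proof -
  have "off_diagonal E = Sigma E (\<lambda>e. E - {e})"
    by (auto simp: off_diagonal_def)
  then have off: "(\<Sum>(e, f)\<in>off_diagonal E. x e * x f) = (\<Sum>e\<in>E. \<Sum>f\<in>E - {e}. x e * x f)"
    using assms by (simp add: sum.Sigma)
  have "(\<Sum>e\<in>E. x e)\<^sup>2 = (\<Sum>e\<in>E. \<Sum>f\<in>E. x e * x f)"
    by (simp add: power2_eq_square sum_product)
  also have "\<dots> = (\<Sum>e\<in>E. (x e)\<^sup>2 + (\<Sum>f\<in>E - {e}. x e * x f))"
    using assms by (intro sum.cong) (auto simp: sum.remove power2_eq_square)
  finally show ?thesis
    by (simp add: off sum.distrib)
qed

lemma off_diagonal_sum_eq_0_iff:
  fixes x :: "'a \<Rightarrow> real"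
  assumes "finite E" and nonneg: "\<And>e. e \<in> E \<Longrightarrow> x e \<ge> 0"
  shows "(\<Sum>(e, f)\<in>off_diagonal E. x e * x f) = 0 \<longleftrightarrow> card {e \<in> E. x e > 0} \<le> 1"
proof -
  have "(\<Sum>(e, f)\<in>off_diagonal E. x e * x f) = 0 \<longleftrightarrow>
      (\<forall>p\<in>off_diagonal E. (case p of (e, f) \<Rightarrow> x e * x f) = 0)"
    using nonneg by (intro sum_nonneg_eq_0_iff finite_off_diagonal assms(1))
      (auto simp: off_diagonal_def)
  also have "\<dots> \<longleftrightarrow> (\<forall>e\<in>{e \<in> E. x e > 0}. \<forall>f\<in>{e \<in> E. x e > 0}. e = f)"
    using nonneg by (auto simp: off_diagonal_def order.strict_iff_order)
  also have "\<dots> \<longleftrightarrow> card {e \<in> E. x e > 0} \<le> 1"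
    using assms(1) by (simp add: card_le_Suc0_iff_eq)
  finally show ?thesis .
qed

lemma finite_edges_on: "finite V \<Longrightarrow> finite (edges_on V)"
  by (rule finite_subset[of _ "Pow V"]) (auto simp: edges_on_def)

lemma doubleton_in_edges_on: "u \<in> V \<Longrightarrow> v \<in> V \<Longrightarrow> u \<noteq> v \<Longrightarrow> {u, v} \<in> edges_on V"
  by (auto simp: edges_on_def)

lemma edges_on_mono: "W \<subseteq> V \<Longrightarrow> edges_on W \<subseteq> edges_on V"
  by (auto simp: edges_on_def)

lemma graph_iso_edges_eq_image:
  assumes f: "bij_betw f W X"
    and iso: "\<forall>u\<in>W. \<forall>v\<in>W. {u, v} \<in> F \<longleftrightarrow> {f u, f v} \<in> H"
    and F: "F \<subseteq> edges_on W" and H: "H \<subseteq> edges_on X"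
  shows "F = (\<lambda>d. the_inv_into W f ` d) ` H"
proof -
  define g where "g = the_inv_into W f"
  have g_X: "g i \<in> W" and f_g: "f (g i) = i" if "i \<in> X" for i
    using that f bij_betw_the_inv_into[OF f] f_the_inv_into_f_bij_betw[OF f]
    by (auto simp: g_def bij_betw_def)
  have g_f: "g (f u) = u" if "u \<in> W" for u
    using that f by (simp add: g_def bij_betw_def the_inv_into_f_f)
  have "F \<subseteq> (\<lambda>d. g ` d) ` H"
  proof
    fix e assume "e \<in> F"
    then obtain u v where "u \<in> W" "v \<in> W" "e = {u, v}"
      using F by (auto simp: edges_on_def)
    with \<open>e \<in> F\<close> iso g_f show "e \<in> (\<lambda>d. g ` d) ` H"
      by (intro image_eqI[of _ _ "{f u, f v}"]) auto
  qed
  moreover have "(\<lambda>d. g ` d) ` H \<subseteq> F"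
  proof
    fix e assume "e \<in> (\<lambda>d. g ` d) ` H"
    then obtain i j where "{i, j} \<in> H" "i \<in> X" "j \<in> X" "e = {g i, g j}"
      using H by (auto simp: edges_on_def)
    with iso g_X f_g show "e \<in> F"
      by metis
  qed
  ultimately show ?thesis
    by (simp add: g_def)
qed

lemma subgraphs_iso_P3E:
  assumes "(W, F) \<in> subgraphs_iso V P3"
  obtains a b c where "a \<in> V" "b \<in> V" "c \<in> V" "a \<noteq> b" "b \<noteq> c" "a \<noteq> c"
    and "W = {a, b, c}" and "F = {{a, b}, {b, c}}"
proof -
  from assms have WV: "W \<subseteq> V" and F: "F \<subseteq> edges_on W" and "graph_iso (W, F) P3"
    by (auto simp: subgraphs_iso_def)
  then obtain f where f: "bij_betw f W {0, 1, 2}"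
    and iso: "\<forall>u\<in>W. \<forall>v\<in>W. {u, v} \<in> F \<longleftrightarrow> {f u, f v} \<in> {{0::nat, 1}, {1, 2}}"
    by (auto simp: graph_iso_def P3_def)
  define g where "g = the_inv_into W f"
  have "bij_betw g {0, 1, 2} W"
    unfolding g_def using f by (rule bij_betw_the_inv_into)
  then have W: "W = {g 0, g 1, g 2}" and "inj_on g {0, 1, 2}"
    by (auto simp: bij_betw_def)
  then have "g 0 \<noteq> g 1" "g 1 \<noteq> g 2" "g 0 \<noteq> g 2"
    by (auto dest: inj_onD)
  moreover have "{{0::nat, 1}, {1, 2}} \<subseteq> edges_on {0, 1, 2}"
    by (simp add: doubleton_in_edges_on)
  then have "F = {{g 0, g 1}, {g 1, g 2}}"
    using graph_iso_edges_eq_image[OF f iso F] by (simp add: g_def)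
  ultimately show ?thesis
    using that WV W by blast
qed

lemma beta_nonneg:
  assumes "\<And>e. e \<in> edges_on V \<Longrightarrow> \<mu> e \<ge> 0"
  shows "beta V \<mu> H \<ge> 0"
  unfolding beta_def
proof (intro sum_nonneg prod_nonneg)
  fix G e assume "G \<in> subgraphs_iso V H" "e \<in> snd G"
  then have "e \<in> edges_on V"
    using edges_on_mono by (fastforce simp: subgraphs_iso_def)
  then show "\<mu> e \<ge> 0"
    by (rule assms)
qed

lemma beta_P3_le_off_diagonal_sum:
  assumes "finite V" and nonneg: "\<And>e. e \<in> edges_on V \<Longrightarrow> \<mu> e \<ge> 0"
  shows "beta V \<mu> P3 \<le> (\<Sum>(e, f)\<in>off_diagonal (edges_on V). \<mu> e * \<mu> f)"
proof -
  define S where "S = subgraphs_iso V P3"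
  define D where "D = off_diagonal (edges_on V)"
  have finD: "finite D"
    using assms by (simp add: D_def finite_edges_on finite_off_diagonal)
  have S_edges: "snd G \<in> (\<lambda>(e, f). {e, f}) ` D" and S_vertices: "fst G = \<Union>(snd G)"
    if "G \<in> S" for G
  proof -
    obtain W F where G: "G = (W, F)" by fastforce
    with that obtain a b c where "a \<in> V" "b \<in> V" "c \<in> V" "a \<noteq> b" "b \<noteq> c" "a \<noteq> c"
      and "W = {a, b, c}" "F = {{a, b}, {b, c}}"
      unfolding S_def by (auto elim: subgraphs_iso_P3E)
    moreover from this have "({a, b}, {b, c}) \<in> D"
      by (auto simp: D_def off_diagonal_def edges_on_def doubleton_eq_iff)
    ultimately show "snd G \<in> (\<lambda>(e, f). {e, f}) ` D" "fst G = \<Union>(snd G)"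
      using G by force+
  qed
  have "inj_on snd S"
    by (rule inj_onI) (metis S_vertices prod_eq_iff)
  then have "beta V \<mu> P3 = (\<Sum>F\<in>snd ` S. \<Prod>e\<in>F. \<mu> e)"
    by (simp add: beta_def S_def sum.reindex)
  also have "\<dots> \<le> (\<Sum>F\<in>(\<lambda>(e, f). {e, f}) ` D. \<Prod>e\<in>F. \<mu> e)"
    using finD S_edges nonneg
    by (intro sum_mono2) (auto intro!: prod_nonneg simp: D_def off_diagonal_def)
  also have "\<dots> \<le> (\<Sum>(e, f)\<in>D. \<Prod>e\<in>{e, f}. \<mu> e)"
    using sum_image_le[OF finD, of "\<lambda>F. \<Prod>e\<in>F. \<mu> e" "\<lambda>(e, f). {e, f}"] nonneg
    by (force intro!: prod_nonneg simp: D_def off_diagonal_def split_beta comp_def)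
  also have "\<dots> = (\<Sum>(e, f)\<in>D. \<mu> e * \<mu> f)"
    by (intro sum.cong) (auto simp: D_def off_diagonal_def split: prod.splits)
  finally show ?thesis
    by (simp add: D_def)
qed

lemma edge_prob_measure_sum_supp:
  assumes "edge_prob_measure V \<mu>" and "\<And>e. \<mu> e = 0 \<Longrightarrow> h e = 0"
  shows "(\<Sum>e\<in>supp V \<mu>. h e) = (\<Sum>e\<in>complete_edges V. h e)"
  using assms
  by (intro sum.mono_neutral_left)
     (auto simp: edge_prob_measure_def supp_def finite_edges_on less_le)

lemma edge_prob_measure_supp_nonempty:
  assumes "edge_prob_measure V \<mu>"
  shows "supp V \<mu> \<noteq> {}"
  using edge_prob_measure_sum_supp[OF assms, of \<mu>] assms by (auto simp: edge_prob_measure_def)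

theorem proposition4p1:
  fixes V :: "'a set" and \<mu> :: "'a set \<Rightarrow> real"
  assumes "edge_prob_measure V \<mu>"
  shows "2 * (\<Sum>e\<in>supp V \<mu>. (\<mu> e)\<^sup>2) + beta V \<mu> P3 \<le> 2
    \<and> (2 * (\<Sum>e\<in>supp V \<mu>. (\<mu> e)\<^sup>2) + beta V \<mu> P3 = 2 \<longleftrightarrow> card (supp V \<mu>) = 1)"
proof -
  define E where "E = complete_edges V"
  define T where "T = (\<Sum>(e, f)\<in>off_diagonal E. \<mu> e * \<mu> f)"
  have finV: "finite V" and nonneg: "\<And>e. e \<in> E \<Longrightarrow> \<mu> e \<ge> 0" and "(\<Sum>e\<in>E. \<mu> e) = 1"
    using assms by (auto simp: edge_prob_measure_def E_def)
  then have squares: "(\<Sum>e\<in>supp V \<mu>. (\<mu> e)\<^sup>2) = 1 - T"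
    using square_sum_eq_sum_squares_plus_off_diagonal[of E \<mu>]
      edge_prob_measure_sum_supp[OF assms, of "\<lambda>e. (\<mu> e)\<^sup>2"]
    by (simp add: T_def E_def finite_edges_on)
  have "T \<ge> 0"
    unfolding T_def using nonneg by (intro sum_nonneg) (auto simp: off_diagonal_def)
  moreover have "0 \<le> beta V \<mu> P3"
    using nonneg unfolding E_def by (rule beta_nonneg)
  moreover have "beta V \<mu> P3 \<le> T"
    using finV nonneg unfolding T_def E_def by (rule beta_P3_le_off_diagonal_sum)
  moreover have "T = 0 \<longleftrightarrow> card (supp V \<mu>) = 1"
    using off_diagonal_sum_eq_0_iff[of E \<mu>] finV nonneg edge_prob_measure_supp_nonempty[OF assms]
    by (auto simp: T_def E_def supp_def finite_edges_on le_Suc_eq card_0_eq)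
  ultimately show ?thesis
    unfolding squares by (smt (verit))
qed

end
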